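(* Let $\ell\ge1$ and $N$ be integers and let $f:\binom{[N]}{2}\to\binom{[N]}{\ell}$ satisfy $f(e)\cap e=\emptyset$ for all $e\in\binom{[N]}{2}$. Let $X\subseteq[N]$ be the set of $x\in[N]$ such that $x\in f(e)$ for at most $\ell N$ pairs $e\in\binom{[N]}{2}$. Let $G$ be a graph with $n$ vertices and $m$ edges, where $m$ is a perfect square, $n/\sqrt m=2^T$ for a positive integer $T$, and fewer than $n/2$ vertices of $G$ are isolated. Let $u_1,\dots,u_n$, $\prec$, $U_0,\dots,U_T$ and the Embedding Algorithm be as described in the context. Suppose $X_0',\dots,X_T'\subseteq X$ are pairwise disjoint sets satisfying properties (P1), (P2), (P3) of the context. Then there are subsets $X_j\subseteq X_j'$, $0\le j\le T$, such that the Embedding Algorithm with input $t=T$ and $X_0,\dots,X_T$ does not fail and returns an injection $\varphi:V(G)\to X$ satisfying $f(\{\varphi(v),\varphi(u)\})\cap\varphi(V(G))=\emptyset$ for every edge $vu\in E(G)$.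
   Context: Setup. $[N]=\{1,\dots,N\}$, $\binom{[N]}{k}$ is the family of $k$-subsets. Order $V(G)$ as $u_1,\dots,u_n$ with $d(u_1)\ge\dots\ge d(u_n)$ (degrees in $G$), and write $u_i\prec u_j$ iff $i<j$. Let $U_0=\{u_i:1\le i\le\sqrt m\}$ and for $1\le j\le T$ let $U_j=\{u_i:\sqrt m\,2^{j-1}<i\le\sqrt m\,2^j\}$. For sets $A_0,\dots,A_T$ write $A_{\le j}=A_0\cup\dots\cup A_j$. Embedding Algorithm. Input: $t\in\{0,\dots,T\}$ and pairwise disjoint $X_0,\dots,X_t\subseteq X$. Go over $j=0,\dots,t$ in order, and for each $j$ over the vertices $u\in U_j$ in the order $\prec$. For such $u$, let $X_u$ be the set of $x\in X_j$ such that: (a) $x\ne\varphi(v)$ for every $v\prec u$; (b) $x\notin f(\{\varphi(v),\varphi(w)\})$ for every edge $vw\in E(G)$ with $v,w\in U_0\cup\dots\cup U_{j-1}$; (c) for every neighbour $v$ of $u$ with $v\prec u$, $f(\{\varphi(v),x\})\cap X_{\le j}=\emptyset$. If $X_u=\emptyset$, stop and report failure; otherwise set $\varphi(u)$ to be the smallest element of $X_u$ (in the natural order of $[N]$). If it does not fail, the output is the map $\varphi:U_{\le t}\to X_{\le t}$. Properties of disjoint sets $X_0',\dots,X_T'\subseteq X$: (P1) $3.9|U_j|<|X_j'|<4.1|U_j|$ for all $0\le j\le T$. (P2) For each $j\in\{0,\dots,T-1\}$ and every choice of subsets $X_i\subseteq X_i'$ ($0\le i\le j$), if the Embedding Algorithm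 with input $t=j$ and $X_0,\dots,X_j$ does not fail and outputs $\varphi$, then the set $L=\bigcup f(\{\varphi(v),\varphi(u)\})$, the union over all edges $vu\in E(G)$ with $v,u\in U_{\le j}$, satisfies $|L\cap X_{j+1}'|\le|X_{j+1}'|/9$. (P3) For all $0\le i\le j\le T$, the number $r_{i,j}$ of pairs of distinct vertices $(x,y)\in X_i'\times X_j'$ with $f(\{x,y\})\cap X'_{\le j}\neq\emptyset$ satisfies $r_{i,j}\le|U_i||U_j|^2/(5m)$. *)

theory Defs
  imports Complex_Main
begin

text \<open>Vertices of G are enumerated as u 1, ..., u n (positions); u i precedes u j iff i < j.
  Index blocks: U_0 = positions 1 .. sqrt m, U_j = positions in (sqrt m 2^(j-1), sqrt m 2^j].\<close>

definition Ublk :: "nat \<Rightarrow> nat \<Rightarrow> nat set" where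
  "Ublk m j = {i. 1 \<le> i \<and>
     (if j = 0 then real i \<le> sqrt (real m)
      else sqrt (real m) * 2 ^ (j - 1) < real i \<and> real i \<le> sqrt (real m) * 2 ^ j)}"

definition Ule :: "nat \<Rightarrow> nat \<Rightarrow> nat set" where
  "Ule m j = (\<Union>i\<le>j. Ublk m i)"

definition blk :: "nat \<Rightarrow> nat \<Rightarrow> nat" where
  "blk m i = (LEAST j. i \<in> Ublk m j)"

definition Xle :: "(nat \<Rightarrow> nat set) \<Rightarrow> nat \<Rightarrow> nat set" where
  "Xle Xs j = (\<Union>i\<le>j. Xs i)"

text \<open>The set X_u of admissible images for the vertex at position i, given the partial map phi
  on earlier positions (conditions (a), (b), (c)).\<close>
definition cand :: "(nat set \<Rightarrow> nat set) \<Rightarrow> 'a set set \<Rightarrow> (nat \<Rightarrow> 'a) \<Rightarrow> nat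
    \<Rightarrow> (nat \<Rightarrow> nat set) \<Rightarrow> (nat \<Rightarrow> nat) \<Rightarrow> nat \<Rightarrow> nat set" where
  "cand f Ed u m Xs phi i =
    (let j = blk m i in
     {x \<in> Xs j.
        x \<notin> phi ` {1..<i}
      \<and> (\<forall>k l. 0 < j \<and> k \<in> Ule m (j - 1) \<and> l \<in> Ule m (j - 1) \<and> {u k, u l} \<in> Ed
              \<longrightarrow> x \<notin> f {phi k, phi l})
      \<and> (\<forall>k. 1 \<le> k \<and> k < i \<and> {u k, u i} \<in> Ed \<longrightarrow> f {phi k, x} \<inter> Xle Xs j = {})})"

fun emb_run :: "(nat set \<Rightarrow> nat set) \<Rightarrow> 'a set set \<Rightarrow> (nat \<Rightarrow> 'a) \<Rightarrow> nat
    \<Rightarrow> (nat \<Rightarrow> nat set) \<Rightarrow> nat \<Rightarrow> (nat \<Rightarrow> nat) option" where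
  "emb_run f Ed u m Xs 0 = Some (\<lambda>_. 0)"
| "emb_run f Ed u m Xs (Suc k) =
     (case emb_run f Ed u m Xs k of
        None \<Rightarrow> None
      | Some phi \<Rightarrow>
          (let C = cand f Ed u m Xs phi (Suc k) in
           if C = {} then None else Some (phi(Suc k := Min C))))"

text \<open>The Embedding Algorithm with input t: processes U_0, ..., U_t, i.e. positions
  1 .. floor(sqrt m 2^t). The output is indexed by positions.\<close>
definition emb_alg :: "(nat set \<Rightarrow> nat set) \<Rightarrow> 'a set set \<Rightarrow> (nat \<Rightarrow> 'a) \<Rightarrow> nat
    \<Rightarrow> (nat \<Rightarrow> nat set) \<Rightarrow> nat \<Rightarrow> (nat \<Rightarrow> nat) option" where
  "emb_alg f Ed u m Xs t = emb_run f Ed u m Xs (nat \<lfloor>sqrt (real m) * 2 ^ t\<rfloor>)"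

definition deg :: "'a set set \<Rightarrow> 'a \<Rightarrow> nat" where
  "deg Ed v = card {e \<in> Ed. v \<in> e}"

definition Xset :: "(nat set \<Rightarrow> nat set) \<Rightarrow> nat \<Rightarrow> nat \<Rightarrow> nat set" where
  "Xset f N l = {x \<in> {1..N}. card {e. e \<subseteq> {1..N} \<and> card e = 2 \<and> x \<in> f e} \<le> l * N}"

end

theory Submission
  imports Defs
begin

(* Call y in X'_j bad if, for some k >= j, more than |U_k| / D_k elements x of X'_k have
   f {y, x} meeting X'_0 u ... u X'_k, where D_k = deg_bound k bounds the number of earlier
   neighbours of a vertex of U_k (D_0 = sqrt m, and for k > 0 the degree of the first vertex of
   U_k, as vertices are sorted by degree). By (P3) at most |U_j| |U_k| D_k / (5 m) elements of X'_j
   are bad for k, and the handshake lemma gives sum_k |U_k| D_k <= 5 m, so at most |U_j| elements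
   of X'_j are bad; X_j = good j consists of the others. When the algorithm reaches a vertex of
   U_j, the candidates in X_j are cut down by fewer than |U_j| images of earlier vertices of U_j,
   by at most |X'_j| / 9 elements excluded through (P2), and by at most D_j * |U_j| / D_j = |U_j|
   elements in conflict with earlier neighbours. By (P1) and 3.9 * 8/9 > 3 a candidate remains,
   and conditions (a)-(c) make the output an injection whose edge images avoid the image. *)

lemma emb_run_prefix:
  "emb_run f Ed u m Xs k = Some phi \<Longrightarrow> k' \<le> k \<Longrightarrow>
   \<exists>phi'. emb_run f Ed u m Xs k' = Some phi' \<and> (\<forall>i. 1 \<le> i \<and> i \<le> k' \<longrightarrow> phi' i = phi i)"
proof (induction k arbitrary: phi)
  case 0
  then show ?case by auto
next
  case (Suc k)
  show ?case
  proof (cases "k' = Suc k")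
    case True
    then show ?thesis using Suc.prems by auto
  next
    case False
    from Suc.prems(1) obtain phi0 where run: "emb_run f Ed u m Xs k = Some phi0"
      and "phi = phi0(Suc k := Min (cand f Ed u m Xs phi0 (Suc k)))"
      by (auto simp: Let_def split: option.splits if_splits)
    then show ?thesis using Suc.IH[OF run] False Suc.prems(2) by auto
  qed
qed

lemma emb_run_Suc:
  "emb_run f Ed u m Xs k = Some phi \<Longrightarrow> cand f Ed u m Xs phi (Suc k) \<noteq> {} \<Longrightarrow>
   emb_run f Ed u m Xs (Suc k) = Some (phi(Suc k := Min (cand f Ed u m Xs phi (Suc k))))"
  by (simp add: Let_def)

lemma cand_cong:
  assumes "\<And>k. 1 \<le> k \<Longrightarrow> k < i \<Longrightarrow> phi k = phi' k"
    and "\<And>k. 0 < blk m i \<Longrightarrow> k \<in> Ule m (blk m i - 1) \<Longrightarrow> 1 \<le> k \<and> k < i"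
  shows "cand f Ed u m Xs phi i = cand f Ed u m Xs phi' i"
proof -
  have "phi ` {1..<i} = phi' ` {1..<i}" using assms(1) by (auto intro!: image_cong)
  then show ?thesis unfolding cand_def Let_def
    using assms by (intro Collect_cong conj_cong refl) (metis atLeastLessThan_iff)+
qed

lemma
  assumes "x \<in> cand f Ed u m Xs phi i"
  shows cand_in_block: "x \<in> Xs (blk m i)"
    and cand_fresh: "x \<notin> phi ` {1..<i}"
    and cand_avoids_old_edges: "\<And>k l. 0 < blk m i \<Longrightarrow> k \<in> Ule m (blk m i - 1) \<Longrightarrow>
          l \<in> Ule m (blk m i - 1) \<Longrightarrow> {u k, u l} \<in> Ed \<Longrightarrow> x \<notin> f {phi k, phi l}"
    and cand_back_edges: "\<And>k. 1 \<le> k \<Longrightarrow> k < i \<Longrightarrow> {u k, u i} \<in> Ed \<Longrightarrow>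
          f {phi k, x} \<inter> Xle Xs (blk m i) = {}"
  using assms by (simp_all add: cand_def Let_def)

lemma sum_deg_eq_twice_card:
  assumes "finite V" and "\<And>e. e \<in> Ed \<Longrightarrow> e \<subseteq> V \<and> card e = 2"
  shows "(\<Sum>v\<in>V. deg Ed v) = 2 * card Ed"
proof -
  have "finite Ed" using assms by (meson finite_Pow_iff finite_subset subsetI PowI)
  then have "(\<Sum>v\<in>V. deg Ed v) = (\<Sum>e\<in>Ed. \<Sum>v\<in>V. if v \<in> e then 1 else 0)"
    unfolding deg_def by (simp add: sum.swap[of _ V] sum.If_cases Int_def)
  also have "\<dots> = (\<Sum>e\<in>Ed. card e)"
    using assms by (intro sum.cong refl) (simp add: sum.If_cases Int_absorb1 Int_def[symmetric])
  also have "\<dots> = 2 * card Ed" using assms(2) by simp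
  finally show ?thesis .
qed

lemma card_neighbours_le_deg:
  assumes "finite Ed" and "inj_on u A"
  shows "card {k \<in> A. {u k, v} \<in> Ed} \<le> deg Ed v"
  unfolding deg_def
proof (rule card_inj_on_le)
  show "inj_on (\<lambda>k. {u k, v}) {k \<in> A. {u k, v} \<in> Ed}"
  proof (rule inj_onI)
    fix k k' assume "k \<in> {k \<in> A. {u k, v} \<in> Ed}" "k' \<in> {k \<in> A. {u k, v} \<in> Ed}"
      and "{u k, v} = {u k', v}"
    then show "k = k'"
      using assms(2) by (metis (no_types, lifting) doubleton_eq_iff inj_onD mem_Collect_eq)
  qed
  show "(\<lambda>k. {u k, v}) ` {k \<in> A. {u k, v} \<in> Ed} \<subseteq> {e \<in> Ed. v \<in> e}" by auto
  show "finite {e \<in> Ed. v \<in> e}" using assms(1) by simp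
qed

lemma embedding_via_bij:
  assumes u: "bij_betw u I V" and inj: "inj_on phi I" and img: "phi ` I \<subseteq> X"
    and edges: "\<And>e. e \<in> Ed \<Longrightarrow> e \<subseteq> V"
    and avoid: "\<And>a b. a \<in> I \<Longrightarrow> b \<in> I \<Longrightarrow> {u a, u b} \<in> Ed \<Longrightarrow> f {phi a, phi b} \<inter> phi ` I = {}"
  shows "let psi = (\<lambda>v. phi (the_inv_into I u v)) in
           inj_on psi V \<and> psi ` V \<subseteq> X \<and> (\<forall>v w. {v, w} \<in> Ed \<longrightarrow> f {psi v, psi w} \<inter> psi ` V = {})"
proof -
  define g where "g = the_inv_into I u"
  have g: "bij_betw g V I" unfolding g_def using u by (rule bij_betw_the_inv_into)
  have u_g: "u (g v) = v" if "v \<in> V" for v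
    unfolding g_def using u that by (rule f_the_inv_into_f_bij_betw)
  have psi_V: "(\<lambda>v. phi (g v)) ` V = phi ` I"
    using g by (auto simp: bij_betw_def image_image[symmetric])
  have "inj_on (\<lambda>v. phi (g v)) V"
    using comp_inj_on[of g V phi] g inj by (simp add: bij_betw_def comp_def)
  moreover have "f {phi (g v), phi (g w)} \<inter> phi ` I = {}" if "{v, w} \<in> Ed" for v w
  proof -
    have "v \<in> V" "w \<in> V" using edges[OF that] by auto
    then show ?thesis using avoid[of "g v" "g w"] g u_g that by (auto simp: bij_betw_def)
  qed
  ultimately show ?thesis unfolding Let_def g_def[symmetric] psi_V using img by simp
qed

lemma Ublk_square:
  "Ublk (s\<^sup>2) j = (if j = 0 then {1..s} else {s * 2 ^ (j - 1) <.. s * 2 ^ j})"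
proof -
  have "sqrt (real (s\<^sup>2)) = real s" by simp
  moreover have "real s * 2 ^ k = real (s * 2 ^ k)" for k by simp
  ultimately show ?thesis
    unfolding Ublk_def by (cases j) (simp_all only: of_nat_le_iff of_nat_less_iff, auto)
qed

lemma Ule_square: "Ule (s\<^sup>2) j = {1 .. s * 2 ^ j}"
proof (induction j)
  case 0
  then show ?case by (simp add: Ule_def Ublk_square)
next
  case (Suc j)
  have "Ule (s\<^sup>2) (Suc j) = {1 .. s * 2 ^ j} \<union> {s * 2 ^ j <.. s * 2 ^ Suc j}"
    using Suc by (simp add: Ule_def atMost_Suc Ublk_square Un_commute)
  also have "\<dots> = {1 .. s * 2 ^ Suc j}"
    by (cases "s = 0") (simp_all add: ivl_disj_un_two(8))
  finally show ?case .
qed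

lemma card_Ublk_square: "card (Ublk (s\<^sup>2) j) = (if j = 0 then s else s * 2 ^ (j - 1))"
  by (cases j) (simp_all add: Ublk_square)

lemma Ublk_square_less:
  assumes "j < j'" "i \<in> Ublk (s\<^sup>2) j" "k \<in> Ublk (s\<^sup>2) j'"
  shows "i < k"
proof -
  have "i \<le> s * 2 ^ j" using assms(2) by (simp add: Ublk_square split: if_splits)
  also have "\<dots> \<le> s * 2 ^ (j' - 1)"
    using assms(1) by (intro mult_le_mono2 power_increasing) auto
  also have "\<dots> < k" using assms(1,3) by (simp add: Ublk_square)
  finally show ?thesis .
qed

lemma blk_square: "i \<in> Ublk (s\<^sup>2) j \<Longrightarrow> blk (s\<^sup>2) i = j"
  unfolding blk_def by (rule Least_equality) (metis Ublk_square_less less_irrefl not_le)+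

lemma emb_alg_square: "emb_alg f Ed u (s\<^sup>2) Xs t = emb_run f Ed u (s\<^sup>2) Xs (s * 2 ^ t)"
proof -
  have "sqrt (real (s\<^sup>2)) * 2 ^ t = real (s * 2 ^ t)" by simp
  then show ?thesis unfolding emb_alg_def by (simp only: floor_of_nat nat_int)
qed

locale embedding_setup =
  fixes n m T s :: nat
    and f :: "nat set \<Rightarrow> nat set"
    and V :: "'a set" and Ed :: "'a set set"
    and u :: "nat \<Rightarrow> 'a"
    and X :: "nat set" and X' :: "nat \<Rightarrow> nat set"
  assumes finite_X: "finite X"
    and finite_V: "finite V"
    and edges: "\<And>e. e \<in> Ed \<Longrightarrow> e \<subseteq> V \<and> card e = 2"
    and m_card: "m = card Ed"
    and m_square: "m = s\<^sup>2" and s_pos: "0 < s" and n_eq: "n = s * 2 ^ T"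
    and u: "bij_betw u {1..n} V"
    and u_ord: "\<And>i j. 1 \<le> i \<Longrightarrow> i < j \<Longrightarrow> j \<le> n \<Longrightarrow> deg Ed (u j) \<le> deg Ed (u i)"
    and X'_sub: "\<And>j. j \<le> T \<Longrightarrow> X' j \<subseteq> X"
    and X'_disj: "\<And>i j. i \<le> T \<Longrightarrow> j \<le> T \<Longrightarrow> i \<noteq> j \<Longrightarrow> X' i \<inter> X' j = {}"
    and P1: "\<And>j. j \<le> T \<Longrightarrow>
              3.9 * real (card (u ` Ublk m j)) < real (card (X' j))
            \<and> real (card (X' j)) < 4.1 * real (card (u ` Ublk m j))"
    and P2: "\<And>j Xs phi. j < T \<Longrightarrow> (\<forall>i\<le>j. Xs i \<subseteq> X' i) \<Longrightarrow>
              emb_alg f Ed u m Xs j = Some phi \<Longrightarrow>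
              real (card ((\<Union>{f {phi k, phi k'} | k k'. k \<in> Ule m j \<and> k' \<in> Ule m j
                                                   \<and> {u k, u k'} \<in> Ed}) \<inter> X' (Suc j)))
                \<le> real (card (X' (Suc j))) / 9"
    and P3: "\<And>i j. i \<le> j \<Longrightarrow> j \<le> T \<Longrightarrow>
              real (card {(x, y). x \<in> X' i \<and> y \<in> X' j \<and> x \<noteq> y
                                  \<and> f {x, y} \<inter> Xle X' j \<noteq> {}})
                \<le> real (card (u ` Ublk m i)) * real (card (u ` Ublk m j)) ^ 2 / (5 * real m)"
begin

lemmas Ublk_eq = Ublk_square[where s = s, folded m_square]
  and Ule_eq = Ule_square[where s = s, folded m_square]
  and card_Ublk = card_Ublk_square[where s = s, folded m_square]
  and Ublk_less = Ublk_square_less[where s = s, folded m_square]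
  and blk_eq = blk_square[where s = s, folded m_square]
  and emb_alg_eq = emb_alg_square[where s = s, folded m_square]

lemma finite_X': "j \<le> T \<Longrightarrow> finite (X' j)"
  using X'_sub finite_X by (meson finite_subset)

lemma finite_Ed: "finite Ed"
  using edges finite_V by (meson PowI finite_Pow_iff finite_subset subsetI)

lemma inj_u: "inj_on u {1..n}"
  using u by (simp add: bij_betw_def)

lemma card_Ublk_pos: "0 < card (Ublk m j)"
  using s_pos by (simp add: card_Ublk)

lemma Ublk_subset: "j \<le> T \<Longrightarrow> Ublk m j \<subseteq> {1..n}"
  unfolding n_eq Ule_eq[symmetric] Ule_def by auto

lemma card_image_Ublk: "j \<le> T \<Longrightarrow> card (u ` Ublk m j) = card (Ublk m j)"
  by (meson Ublk_subset card_image inj_on_subset inj_u)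

lemma
  assumes "1 \<le> i" "i \<le> n"
  shows blk_le_T: "blk m i \<le> T" and in_Ublk_blk: "i \<in> Ublk m (blk m i)"
proof -
  have "i \<in> Ule m T" using assms by (simp add: Ule_eq n_eq)
  then obtain j where "j \<le> T" "i \<in> Ublk m j" by (auto simp: Ule_def)
  then show "blk m i \<le> T" "i \<in> Ublk m (blk m i)" using blk_eq by auto
qed

lemma blk_mono: "1 \<le> k \<Longrightarrow> k \<le> i \<Longrightarrow> i \<le> n \<Longrightarrow> blk m k \<le> blk m i"
  by (meson Ublk_less in_Ublk_blk leD le_trans not_le_imp_less)

lemma Ule_before_blk:
  assumes "1 \<le> i" "i \<le> n" "0 < blk m i" "k \<in> Ule m (blk m i - 1)"
  shows "1 \<le> k \<and> k < i"
  using in_Ublk_blk[OF assms(1,2)] assms(3,4) by (auto simp: Ublk_eq Ule_eq)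

definition deg_bound :: "nat \<Rightarrow> nat" where
  "deg_bound j = (if j = 0 then s else deg Ed (u (s * 2 ^ (j - 1) + 1)))"

lemma card_earlier_neighbours:
  assumes i: "1 \<le> i" "i \<le> n"
  shows "card {k \<in> {1..<i}. {u k, u i} \<in> Ed} \<le> deg_bound (blk m i)"
proof (cases "blk m i = 0")
  case True
  then have "i \<le> s" using in_Ublk_blk[OF i] by (simp add: Ublk_eq)
  moreover have "card {k \<in> {1..<i}. {u k, u i} \<in> Ed} \<le> card {1..<i}" by (intro card_mono) auto
  ultimately show ?thesis using True by (simp add: deg_bound_def)
next
  case False
  have first: "s * 2 ^ (blk m i - 1) + 1 \<le> i" using in_Ublk_blk[OF i] False by (simp add: Ublk_eq)
  have "{1..<i} \<subseteq> {1..n}" using i by auto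
  then have "card {k \<in> {1..<i}. {u k, u i} \<in> Ed} \<le> deg Ed (u i)"
    using finite_Ed inj_on_subset[OF inj_u] by (intro card_neighbours_le_deg)
  also have "\<dots> \<le> deg Ed (u (s * 2 ^ (blk m i - 1) + 1))"
    using first i u_ord[of "s * 2 ^ (blk m i - 1) + 1" i]
    by (cases "s * 2 ^ (blk m i - 1) + 1 = i") auto
  finally show ?thesis using False by (simp add: deg_bound_def)
qed

lemma deg_bound_Suc_le:
  assumes "k < T" "p \<in> Ublk m k"
  shows "deg_bound (Suc k) \<le> deg Ed (u p)"
proof -
  have p: "1 \<le> p" "p \<le> s * 2 ^ k" using assms(2) by (auto simp: Ublk_eq split: if_splits)
  have "s * 2 ^ k < s * 2 ^ T" using assms(1) s_pos by simp
  then have "s * 2 ^ k + 1 \<le> n" using n_eq by linarith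
  then show ?thesis using p u_ord[of p "s * 2 ^ k + 1"] by (simp add: deg_bound_def)
qed

lemma sum_deg_u: "(\<Sum>p\<in>{1..n}. deg Ed (u p)) = 2 * m"
  using sum.reindex_bij_betw[OF u, of "deg Ed"] sum_deg_eq_twice_card[OF finite_V edges] m_card
  by simp

text \<open>The block \<open>U\<^sub>0\<close> contributes \<open>m\<close>, and \<open>U\<^sub>k\<^sub>+\<^sub>1\<close> at most twice the degree sum of \<open>U\<^sub>k\<close>.\<close>
lemma sum_deg_bound: "(\<Sum>k\<le>T. card (Ublk m k) * deg_bound k) \<le> 5 * m"
proof -
  have step: "card (Ublk m (Suc k)) * deg_bound (Suc k) \<le> 2 * (\<Sum>p\<in>Ublk m k. deg Ed (u p))"
    if k: "k < T" for k
  proof -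
    have "card (Ublk m (Suc k)) \<le> 2 * card (Ublk m k)" by (cases k) (simp_all add: card_Ublk)
    then have "card (Ublk m (Suc k)) * deg_bound (Suc k)
        \<le> 2 * (card (Ublk m k) * deg_bound (Suc k))"
      by (metis mult.assoc mult_le_mono1)
    also have "card (Ublk m k) * deg_bound (Suc k) \<le> (\<Sum>p\<in>Ublk m k. deg Ed (u p))"
      using sum_bounded_below[of "Ublk m k" "deg_bound (Suc k)" "\<lambda>p. deg Ed (u p)"]
        deg_bound_Suc_le[OF k] by simp
    finally show ?thesis by simp
  qed
  have disjoint: "(\<Sum>k<T. \<Sum>p\<in>Ublk m k. deg Ed (u p)) = (\<Sum>p\<in>(\<Union>k<T. Ublk m k). deg Ed (u p))"
  proof (rule sum.UNION_disjoint[symmetric])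
    show "\<forall>k\<in>{..<T}. finite (Ublk m k)" by (simp add: Ublk_eq)
    show "\<forall>i\<in>{..<T}. \<forall>j\<in>{..<T}. i \<noteq> j \<longrightarrow> Ublk m i \<inter> Ublk m j = {}"
      by (metis blk_eq disjoint_iff)
  qed simp
  have "(\<Sum>k<T. card (Ublk m (Suc k)) * deg_bound (Suc k)) \<le> (\<Sum>k<T. 2 * (\<Sum>p\<in>Ublk m k. deg Ed (u p)))"
    using step by (intro sum_mono) simp
  also have "\<dots> = 2 * (\<Sum>p\<in>(\<Union>k<T. Ublk m k). deg Ed (u p))"
    by (simp only: sum_distrib_left[symmetric] disjoint)
  also have "\<dots> \<le> 2 * (\<Sum>p\<in>{1..n}. deg Ed (u p))"
    using Ublk_subset
    by (intro mult_le_mono2 sum_mono2) (simp, meson UN_least lessThan_iff less_imp_le, simp)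
  finally have "(\<Sum>k<T. card (Ublk m (Suc k)) * deg_bound (Suc k)) \<le> 4 * m"
    using sum_deg_u by simp
  moreover have "card (Ublk m 0) * deg_bound 0 = m"
    unfolding card_Ublk deg_bound_def by (simp add: m_square power2_eq_square)
  ultimately show ?thesis by (simp add: sum.atMost_shift)
qed

definition conflict_set :: "nat \<Rightarrow> nat \<Rightarrow> nat set" where
  "conflict_set k y = {x \<in> X' k. y \<noteq> x \<and> f {y, x} \<inter> Xle X' k \<noteq> {}}"

definition bad :: "nat \<Rightarrow> nat \<Rightarrow> nat set" where
  "bad j k = {y \<in> X' j. card (Ublk m k) < card (conflict_set k y) * deg_bound k}"

definition good :: "nat \<Rightarrow> nat set" where
  "good j = X' j - (\<Union>k\<in>{j..T}. bad j k)"

lemma good_subset: "good j \<subseteq> X' j"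
  by (auto simp: good_def)

lemma card_bad:
  assumes jk: "j \<le> k" and kT: "k \<le> T"
  shows "real (card (bad j k))
           \<le> real (card (Ublk m j)) * real (card (Ublk m k)) * real (deg_bound k) / (5 * real m)"
proof -
  let ?Uj = "real (card (Ublk m j))" and ?Uk = "real (card (Ublk m k))"
  have fin: "finite (X' j)" "finite (X' k)" using finite_X' jk kT by auto
  have "{(x, y). x \<in> X' j \<and> y \<in> X' k \<and> x \<noteq> y \<and> f {x, y} \<inter> Xle X' k \<noteq> {}}
      = Sigma (X' j) (conflict_set k)"
    by (auto simp: conflict_set_def)
  then have pairs: "real (\<Sum>y\<in>X' j. card (conflict_set k y)) \<le> ?Uj * ?Uk ^ 2 / (5 * real m)"
    using P3[OF jk kT] fin card_image_Ublk[OF le_trans[OF jk kT]] card_image_Ublk[OF kT]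
    by (simp add: card_SigmaI conflict_set_def)
  have "card (bad j k) * card (Ublk m k) \<le> (\<Sum>y\<in>bad j k. card (conflict_set k y) * deg_bound k)"
    using sum_bounded_below[of "bad j k" "card (Ublk m k)"] by (force simp: bad_def)
  also have "\<dots> \<le> (\<Sum>y\<in>X' j. card (conflict_set k y)) * deg_bound k"
    unfolding sum_distrib_right using fin by (intro sum_mono2) (auto simp: bad_def)
  finally have "real (card (bad j k)) * ?Uk
      \<le> real (\<Sum>y\<in>X' j. card (conflict_set k y)) * real (deg_bound k)"
    by (metis of_nat_le_iff of_nat_mult)
  also have "\<dots> \<le> ?Uj * ?Uk ^ 2 / (5 * real m) * real (deg_bound k)"
    using pairs by (intro mult_right_mono) auto
  also have "\<dots> = ?Uj * ?Uk * real (deg_bound k) / (5 * real m) * ?Uk"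
    by (simp add: power2_eq_square)
  finally show ?thesis using card_Ublk_pos[of k] by (meson mult_right_le_imp_le of_nat_0_less_iff)
qed

lemma card_not_good:
  assumes "j \<le> T"
  shows "real (card (\<Union>k\<in>{j..T}. bad j k)) \<le> real (card (Ublk m j))"
proof -
  have "real (card (\<Union>k\<in>{j..T}. bad j k)) \<le> (\<Sum>k\<in>{j..T}. real (card (bad j k)))"
    by (metis card_UN_le finite_atLeastAtMost of_nat_le_iff of_nat_sum)
  also have "\<dots> \<le> (\<Sum>k\<in>{j..T}.
      real (card (Ublk m j)) * real (card (Ublk m k)) * real (deg_bound k) / (5 * real m))"
    using card_bad by (intro sum_mono) auto
  also have "\<dots> = real (card (Ublk m j)) / (5 * real m)
      * (\<Sum>k\<in>{j..T}. real (card (Ublk m k) * deg_bound k))"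
    by (simp add: sum_distrib_left mult.assoc)
  also have "\<dots> \<le> real (card (Ublk m j)) / (5 * real m)
      * (\<Sum>k\<le>T. real (card (Ublk m k) * deg_bound k))"
    by (intro mult_left_mono sum_mono2) auto
  also have "\<dots> \<le> real (card (Ublk m j)) / (5 * real m) * (5 * real m)"
  proof (intro mult_left_mono)
    have "real (\<Sum>k\<le>T. card (Ublk m k) * deg_bound k) \<le> real (5 * m)"
      using sum_deg_bound by (simp only: of_nat_le_iff)
    then show "(\<Sum>k\<le>T. real (card (Ublk m k) * deg_bound k)) \<le> 5 * real m" by simp
  qed simp
  also have "\<dots> = real (card (Ublk m j))"
    using s_pos by (simp add: m_square)
  finally show ?thesis .
qed

definition back_conflicts :: "(nat \<Rightarrow> nat) \<Rightarrow> nat \<Rightarrow> nat set" where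
  "back_conflicts phi i = (\<Union>k\<in>{k \<in> {1..<i}. {u k, u i} \<in> Ed}. conflict_set (blk m i) (phi k))"

context
  fixes i :: nat and phi :: "nat \<Rightarrow> nat"
  assumes i: "1 \<le> i" "i \<le> n"
    and run: "emb_run f Ed u m good (i - 1) = Some phi"
    and placed: "\<And>k. 1 \<le> k \<Longrightarrow> k < i \<Longrightarrow> phi k \<in> cand f Ed u m good phi k"
begin

lemma earlier_image:
  assumes "1 \<le> k" "k < i"
  shows "phi k \<in> good (blk m k)" and "blk m k \<le> blk m i"
  using cand_in_block[OF placed[OF assms]] blk_mono[of k i] assms i by auto

lemma earlier_image_in_block:
  assumes "x \<in> X' (blk m i)" and "x \<in> phi ` {1..<i}"
  shows "x \<in> phi ` ({1..<i} \<inter> Ublk m (blk m i))"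
proof -
  obtain k where k: "1 \<le> k" "k < i" "x = phi k" using assms(2) by auto
  have "X' (blk m k) \<inter> X' (blk m i) \<noteq> {}"
    using earlier_image(1)[OF k(1,2)] good_subset assms(1) k(3) by blast
  moreover have "blk m k \<le> T" "blk m i \<le> T" using blk_le_T k i by auto
  ultimately have "blk m k = blk m i" using X'_disj by blast
  then have "k \<in> Ublk m (blk m i)" using in_Ublk_blk[of k] k i by auto
  then show ?thesis using k by auto
qed

lemma card_earlier_images_in_block:
  "card (phi ` ({1..<i} \<inter> Ublk m (blk m i))) < card (Ublk m (blk m i))"
proof -
  have "{1..<i} \<inter> Ublk m (blk m i) \<subset> Ublk m (blk m i)"
    using in_Ublk_blk[OF i] by auto
  then have "card ({1..<i} \<inter> Ublk m (blk m i)) < card (Ublk m (blk m i))"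
    by (intro psubset_card_mono) (simp add: Ublk_eq)
  then show ?thesis by (meson card_image_le finite_Int finite_atLeastLessThan le_less_trans)
qed

lemma old_edge_images:
  obtains B where "B \<subseteq> X' (blk m i)" and "real (card B) \<le> real (card (X' (blk m i))) / 9"
    and "\<And>x k l. x \<in> X' (blk m i) - B \<Longrightarrow> 0 < blk m i \<Longrightarrow> k \<in> Ule m (blk m i - 1) \<Longrightarrow>
          l \<in> Ule m (blk m i - 1) \<Longrightarrow> {u k, u l} \<in> Ed \<Longrightarrow> x \<notin> f {phi k, phi l}"
proof (cases "blk m i = 0")
  case True
  then show ?thesis using that[of "{}"] by auto
next
  case False
  let ?j = "blk m i"
  have "s * 2 ^ (?j - 1) < i" using in_Ublk_blk[OF i] False by (simp add: Ublk_eq)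
  then have "s * 2 ^ (?j - 1) \<le> i - 1" by arith
  then obtain phi' where run': "emb_alg f Ed u m good (?j - 1) = Some phi'"
    and agree: "\<And>k. k \<in> Ule m (?j - 1) \<Longrightarrow> phi' k = phi k"
    using emb_run_prefix[OF run] by (fastforce simp: emb_alg_eq Ule_eq)
  define B where "B = (\<Union>{f {phi' k, phi' l} | k l. k \<in> Ule m (?j - 1) \<and> l \<in> Ule m (?j - 1)
                                              \<and> {u k, u l} \<in> Ed}) \<inter> X' ?j"
  have "?j - 1 < T" "Suc (?j - 1) = ?j" using blk_le_T[OF i] False by auto
  then have "real (card B) \<le> real (card (X' ?j)) / 9"
    using P2[OF _ _ run'] good_subset unfolding B_def by metis
  show ?thesis
  proof (rule that)
    show "B \<subseteq> X' ?j" by (simp add: B_def)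
    fix x k l
    assume x: "x \<in> X' ?j - B" and "0 < ?j"
      and kl: "k \<in> Ule m (?j - 1)" "l \<in> Ule m (?j - 1)" "{u k, u l} \<in> Ed"
    then have "x \<notin> f {phi' k, phi' l}" unfolding B_def by blast
    then show "x \<notin> f {phi k, phi l}" using agree kl by simp
  qed fact
qed

lemma card_back_conflicts: "card (back_conflicts phi i) \<le> card (Ublk m (blk m i))"
proof -
  let ?j = "blk m i" and ?Nb = "{k \<in> {1..<i}. {u k, u i} \<in> Ed}"
  have each: "card (conflict_set ?j (phi k)) * deg_bound ?j \<le> card (Ublk m ?j)" if "k \<in> ?Nb" for k
  proof -
    have k: "1 \<le> k" "k < i" using that by auto
    then have "phi k \<notin> bad (blk m k) ?j" "phi k \<in> X' (blk m k)"
      using earlier_image[OF k] blk_le_T[OF i] good_subset by (auto simp: good_def)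
    then show ?thesis by (auto simp: bad_def not_less)
  qed
  have "(\<Sum>k\<in>?Nb. card (conflict_set ?j (phi k))) \<le> card (Ublk m ?j)"
  proof (cases "deg_bound ?j = 0")
    case True
    then have "card ?Nb = 0" using card_earlier_neighbours[OF i] by linarith
    moreover have "finite ?Nb" by simp
    ultimately have "?Nb = {}" by simp
    then show ?thesis by (simp only: sum.empty zero_le)
  next
    case False
    have "(\<Sum>k\<in>?Nb. card (conflict_set ?j (phi k))) * deg_bound ?j \<le> (\<Sum>k\<in>?Nb. card (Ublk m ?j))"
      unfolding sum_distrib_right using each by (rule sum_mono)
    also have "\<dots> \<le> deg_bound ?j * card (Ublk m ?j)"
      using card_earlier_neighbours[OF i] by simp
    finally show ?thesis using False by (simp add: mult.commute)
  qed
  moreover have "card (back_conflicts phi i) \<le> (\<Sum>k\<in>?Nb. card (conflict_set ?j (phi k)))"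
    unfolding back_conflicts_def by (rule card_UN_le) simp
  ultimately show ?thesis by linarith
qed

lemma cand_contains:
  assumes B_avoids: "\<And>x k l. x \<in> X' (blk m i) - B \<Longrightarrow> 0 < blk m i \<Longrightarrow>
      k \<in> Ule m (blk m i - 1) \<Longrightarrow> l \<in> Ule m (blk m i - 1) \<Longrightarrow> {u k, u l} \<in> Ed \<Longrightarrow>
      x \<notin> f {phi k, phi l}"
  shows "X' (blk m i) - ((\<Union>k\<in>{blk m i..T}. bad (blk m i) k) \<union> phi ` ({1..<i} \<inter> Ublk m (blk m i))
           \<union> B \<union> back_conflicts phi i) \<subseteq> cand f Ed u m good phi i"
    (is "X' ?j - ?R \<subseteq> _")
proof
  fix x assume x: "x \<in> X' ?j - ?R"
  have "x \<in> X' ?j" "x \<notin> phi ` ({1..<i} \<inter> Ublk m ?j)" using x by auto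
  then have fresh: "x \<notin> phi ` {1..<i}" using earlier_image_in_block by blast
  have "f {phi k, x} \<inter> Xle good ?j = {}" if "1 \<le> k" "k < i" "{u k, u i} \<in> Ed" for k
  proof -
    have "x \<notin> conflict_set ?j (phi k)" using x that by (auto simp: back_conflicts_def)
    moreover have "phi k \<noteq> x" using fresh that by auto
    moreover have "Xle good ?j \<subseteq> Xle X' ?j" using good_subset by (auto simp: Xle_def)
    ultimately show ?thesis using x by (auto simp: conflict_set_def)
  qed
  moreover have "x \<in> good ?j" using x by (auto simp: good_def)
  moreover have "x \<notin> f {phi k, phi l}"
    if "0 < ?j" "k \<in> Ule m (?j - 1)" "l \<in> Ule m (?j - 1)" "{u k, u l} \<in> Ed" for k l
    using B_avoids[OF _ that] x by auto
  ultimately show "x \<in> cand f Ed u m good phi i" using fresh by (simp add: cand_def Let_def)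
qed

lemma cand_nonempty: "cand f Ed u m good phi i \<noteq> {}"
proof -
  let ?j = "blk m i"
  have jT: "?j \<le> T" using blk_le_T[OF i] .
  obtain B where B: "B \<subseteq> X' ?j" "real (card B) \<le> real (card (X' ?j)) / 9"
    and B_avoids: "\<And>x k l. x \<in> X' ?j - B \<Longrightarrow> 0 < ?j \<Longrightarrow> k \<in> Ule m (?j - 1) \<Longrightarrow>
          l \<in> Ule m (?j - 1) \<Longrightarrow> {u k, u l} \<in> Ed \<Longrightarrow> x \<notin> f {phi k, phi l}"
    by (fact old_edge_images)
  define A where "A = phi ` ({1..<i} \<inter> Ublk m ?j)"
  define R where "R = (\<Union>k\<in>{?j..T}. bad ?j k) \<union> A \<union> B \<union> back_conflicts phi i"
  have "X' ?j - R \<noteq> {}"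
  proof
    assume "X' ?j - R = {}"
    have "R \<subseteq> X' ?j \<union> A"
      using B(1) by (auto simp: R_def bad_def back_conflicts_def conflict_set_def)
    then have "finite R" using finite_X'[OF jT] by (auto simp: A_def intro: finite_subset)
    then have "card (X' ?j) \<le> card R" using \<open>X' ?j - R = {}\<close> by (intro card_mono) auto
    also have "\<dots> \<le> card (\<Union>k\<in>{?j..T}. bad ?j k) + card A + card B + card (back_conflicts phi i)"
      unfolding R_def by (meson card_Un_le add_le_mono le_refl le_trans)
    finally have "real (card (X' ?j)) \<le> real (card (\<Union>k\<in>{?j..T}. bad ?j k)) + real (card A)
        + real (card B) + real (card (back_conflicts phi i))" by linarith
    moreover have "3.9 * real (card (Ublk m ?j)) < real (card (X' ?j))"
      using P1[OF jT] card_image_Ublk[OF jT] by simp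
    ultimately show False
      using card_not_good[OF jT] card_earlier_images_in_block card_back_conflicts B(2)
      unfolding A_def by linarith
  qed
  then show ?thesis using cand_contains[OF B_avoids] unfolding R_def A_def by blast
qed

end

lemma emb_run_succeeds:
  "k \<le> n \<Longrightarrow> \<exists>phi. emb_run f Ed u m good k = Some phi \<and>
     (\<forall>i. 1 \<le> i \<and> i \<le> k \<longrightarrow> phi i \<in> cand f Ed u m good phi i)"
proof (induction k)
  case 0
  then show ?case by simp
next
  case (Suc k)
  then obtain phi where run: "emb_run f Ed u m good k = Some phi"
    and placed: "\<forall>i. 1 \<le> i \<and> i \<le> k \<longrightarrow> phi i \<in> cand f Ed u m good phi i" by auto
  define C where "C = cand f Ed u m good phi (Suc k)"
  have "C \<noteq> {}" unfolding C_def using cand_nonempty[of "Suc k" phi] run placed Suc.prems by auto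
  moreover have "C \<subseteq> X' (blk m (Suc k))" using cand_in_block good_subset unfolding C_def by blast
  then have "finite C"
    using finite_X'[OF blk_le_T[of "Suc k"]] Suc.prems by (simp add: finite_subset)
  ultimately have run': "emb_run f Ed u m good (Suc k) = Some (phi(Suc k := Min C))"
    and new: "Min C \<in> C"
    using emb_run_Suc[OF run] C_def by auto
  have same_cand: "cand f Ed u m good (phi(Suc k := Min C)) i = cand f Ed u m good phi i"
    if "1 \<le> i" "i \<le> Suc k" for i
  proof (rule cand_cong)
    show "1 \<le> k' \<and> k' < i" if "0 < blk m i" "k' \<in> Ule m (blk m i - 1)" for k'
      using Ule_before_blk[of i k'] that \<open>1 \<le> i\<close> \<open>i \<le> Suc k\<close> Suc.prems by auto
  qed (use that in auto)
  show ?case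
    using run' placed new same_cand C_def by (auto simp: le_Suc_eq)
qed

context
  fixes phi :: "nat \<Rightarrow> nat"
  assumes placed: "\<And>i. 1 \<le> i \<Longrightarrow> i \<le> n \<Longrightarrow> phi i \<in> cand f Ed u m good phi i"
begin

lemma inj_on_placed: "inj_on phi {1..n}"
proof (rule linorder_inj_onI')
  fix a b assume ab: "a \<in> {1..n}" "b \<in> {1..n}" "a < b"
  then have "phi a \<in> phi ` {1..<b}" by auto
  moreover have "phi b \<notin> phi ` {1..<b}" using cand_fresh[OF placed[of b]] ab(2) by auto
  ultimately show "phi a \<noteq> phi b" by metis
qed

lemma image_placed_subset: "phi ` {1..n} \<subseteq> X"
proof
  fix x assume "x \<in> phi ` {1..n}"
  then obtain i where i: "1 \<le> i" "i \<le> n" and x: "x = phi i" by auto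
  then have "x \<in> X' (blk m i)" using cand_in_block[OF placed[OF i]] good_subset by auto
  then show "x \<in> X" using X'_sub[OF blk_le_T[OF i]] by auto
qed

text \<open>If \<open>c\<close> lies in no later block than \<open>b\<close>, condition (c) for \<open>b\<close> applies; otherwise both
  ends of the edge lie in blocks before that of \<open>c\<close>, and condition (b) for \<open>c\<close> applies.\<close>
lemma edge_image_avoids_image:
  assumes ab: "1 \<le> a" "a < b" "b \<le> n" and e: "{u a, u b} \<in> Ed" and c: "1 \<le> c" "c \<le> n"
  shows "phi c \<notin> f {phi a, phi b}"
proof (cases "blk m c \<le> blk m b")
  case True
  have "f {phi a, phi b} \<inter> Xle good (blk m b) = {}"
    using cand_back_edges[OF placed[of b] ab(1,2) e] ab by auto
  moreover have "phi c \<in> Xle good (blk m b)"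
    using cand_in_block[OF placed[OF c]] True unfolding Xle_def by auto
  ultimately show ?thesis by blast
next
  case False
  have "b \<le> s * 2 ^ blk m b" using in_Ublk_blk[of b] ab by (simp add: Ublk_eq split: if_splits)
  also have "\<dots> \<le> s * 2 ^ (blk m c - 1)"
    using False by (intro mult_le_mono2 power_increasing) auto
  finally have "a \<in> Ule m (blk m c - 1)" "b \<in> Ule m (blk m c - 1)" using ab by (auto simp: Ule_eq)
  then show ?thesis using cand_avoids_old_edges[OF placed[OF c] _ _ _ e] False by auto
qed

lemma edge_images_avoid_image:
  assumes a: "a \<in> {1..n}" and b: "b \<in> {1..n}" and e: "{u a, u b} \<in> Ed"
  shows "f {phi a, phi b} \<inter> phi ` {1..n} = {}"
proof -
  have "a \<noteq> b" using edges[OF e] by (auto simp: card_insert_if split: if_splits)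
  have "phi c \<notin> f {phi a, phi b}" if c: "c \<in> {1..n}" for c
  proof (cases "a < b")
    case True
    then show ?thesis using edge_image_avoids_image[OF _ True _ e] a b c by simp
  next
    case False
    then have "b < a" using \<open>a \<noteq> b\<close> by simp
    moreover have "{u b, u a} \<in> Ed" using e by (simp add: insert_commute)
    ultimately have "phi c \<notin> f {phi b, phi a}" using edge_image_avoids_image a b c by simp
    then show ?thesis by (simp add: insert_commute)
  qed
  then show ?thesis by blast
qed

end

lemma embedding_exists:
  obtains phi where "emb_alg f Ed u m good T = Some phi" and "inj_on phi {1..n}"
    and "phi ` {1..n} \<subseteq> X"
    and "\<And>a b. a \<in> {1..n} \<Longrightarrow> b \<in> {1..n} \<Longrightarrow> {u a, u b} \<in> Ed \<Longrightarrow>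
           f {phi a, phi b} \<inter> phi ` {1..n} = {}"
proof -
  obtain phi where run: "emb_run f Ed u m good n = Some phi"
    and placed: "\<forall>i. 1 \<le> i \<and> i \<le> n \<longrightarrow> phi i \<in> cand f Ed u m good phi i"
    using emb_run_succeeds[of n] by auto
  then have placed: "\<And>i. 1 \<le> i \<Longrightarrow> i \<le> n \<Longrightarrow> phi i \<in> cand f Ed u m good phi i" by simp
  have "emb_alg f Ed u m good T = Some phi" using run by (simp add: emb_alg_eq n_eq)
  then show ?thesis
    using inj_on_placed[OF placed] image_placed_subset[OF placed] edge_images_avoid_image[OF placed]
    by (rule that)
qed

end

theorem lemma2p2:
  fixes l N n m T :: nat
    and f :: "nat set \<Rightarrow> nat set"
    and V :: "'a set" and Ed :: "'a set set"
    and u :: "nat \<Rightarrow> 'a"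
    and X :: "nat set" and X' :: "nat \<Rightarrow> nat set"
  assumes l: "1 \<le> l"
    and f: "\<And>e. e \<subseteq> {1..N} \<Longrightarrow> card e = 2 \<Longrightarrow>
              f e \<subseteq> {1..N} \<and> card (f e) = l \<and> f e \<inter> e = {}"
    and X_def: "X = Xset f N l"
    and G: "finite V" "\<And>e. e \<in> Ed \<Longrightarrow> e \<subseteq> V \<and> card e = 2"
    and n: "n = card V" and m: "m = card Ed"
    and sq: "\<exists>s::nat. m = s ^ 2"
    and T: "0 < T" "real n / sqrt (real m) = 2 ^ T"
    and isol: "real (card {v \<in> V. deg Ed v = 0}) < real n / 2"
    and u: "bij_betw u {1..n} V"
    and u_ord: "\<And>i j. 1 \<le> i \<Longrightarrow> i < j \<Longrightarrow> j \<le> n \<Longrightarrow> deg Ed (u j) \<le> deg Ed (u i)"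
    and X'_sub: "\<And>j. j \<le> T \<Longrightarrow> X' j \<subseteq> X"
    and X'_disj: "\<And>i j. i \<le> T \<Longrightarrow> j \<le> T \<Longrightarrow> i \<noteq> j \<Longrightarrow> X' i \<inter> X' j = {}"
    and P1: "\<And>j. j \<le> T \<Longrightarrow>
              3.9 * real (card (u ` Ublk m j)) < real (card (X' j))
            \<and> real (card (X' j)) < 4.1 * real (card (u ` Ublk m j))"
    and P2: "\<And>j Xs phi. j < T \<Longrightarrow> (\<forall>i\<le>j. Xs i \<subseteq> X' i) \<Longrightarrow>
              emb_alg f Ed u m Xs j = Some phi \<Longrightarrow>
              real (card ((\<Union>{f {phi k, phi k'} | k k'. k \<in> Ule m j \<and> k' \<in> Ule m j
                                                   \<and> {u k, u k'} \<in> Ed}) \<inter> X' (Suc j)))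
                \<le> real (card (X' (Suc j))) / 9"
    and P3: "\<And>i j. i \<le> j \<Longrightarrow> j \<le> T \<Longrightarrow>
              real (card {(x, y). x \<in> X' i \<and> y \<in> X' j \<and> x \<noteq> y
                                  \<and> f {x, y} \<inter> Xle X' j \<noteq> {}})
                \<le> real (card (u ` Ublk m i)) * real (card (u ` Ublk m j)) ^ 2 / (5 * real m)"
  shows "\<exists>Xs. (\<forall>j\<le>T. Xs j \<subseteq> X' j) \<and>
           (\<exists>phi. emb_alg f Ed u m Xs T = Some phi \<and>
              (let psi = (\<lambda>v. phi (the_inv_into {1..n} u v)) in
                 inj_on psi V \<and> psi ` V \<subseteq> X \<and>
                 (\<forall>v w. {v, w} \<in> Ed \<longrightarrow> f {psi v, psi w} \<inter> psi ` V = {})))"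
proof -
  obtain s where m_square: "m = s\<^sup>2" using sq by blast
  then have sqrt_m: "sqrt (real m) = real s" by simp
  then have s_pos: "0 < s" using T(2) by (cases s) auto
  have "real n = real (s * 2 ^ T)" using T(2) sqrt_m s_pos by (simp add: divide_eq_eq)
  then have n_eq: "n = s * 2 ^ T" by (simp only: of_nat_eq_iff)
  have "finite X" unfolding X_def Xset_def by simp
  interpret embedding_setup n m T s f V Ed u X X'
    by unfold_locales (fact \<open>finite X\<close> G m m_square s_pos n_eq u u_ord X'_sub X'_disj P1 P2 P3)+
  obtain phi where run: "emb_alg f Ed u m good T = Some phi"
    and inj: "inj_on phi {1..n}" and img: "phi ` {1..n} \<subseteq> X"
    and avoid: "\<And>a b. a \<in> {1..n} \<Longrightarrow> b \<in> {1..n} \<Longrightarrow> {u a, u b} \<in> Ed \<Longrightarrow>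
       f {phi a, phi b} \<inter> phi ` {1..n} = {}"
    by (fact embedding_exists)
  have edges_V: "\<And>e. e \<in> Ed \<Longrightarrow> e \<subseteq> V" using G(2) by blast
  have "\<forall>j\<le>T. good j \<subseteq> X' j" using good_subset by blast
  moreover have "let psi = (\<lambda>v. phi (the_inv_into {1..n} u v)) in
      inj_on psi V \<and> psi ` V \<subseteq> X \<and> (\<forall>v w. {v, w} \<in> Ed \<longrightarrow> f {psi v, psi w} \<inter> psi ` V = {})"
    using u inj img edges_V avoid by (rule embedding_via_bij)
  ultimately show ?thesis using run by blast
qed

end
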